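(* Let $f:\mathbb{R}^2\to\mathbb{R}$ be a $C^\infty$ function that vanishes on the Hawaiian earring \[ \mathcal H=\bigcup_{n\ge1} C_n, \qquad C_n=\left\{(x,y)\in\mathbb{R}^2:\left(x-\tfrac1n\right)^2+y^2=\tfrac1{n^2}\right\}. \] Then $f$ is flat at the origin, i.e. \[ \frac{\partial^{\alpha_1+\alpha_2} f}{\partial x_1^{\alpha_1}\partial x_2^{\alpha_2}}(0,0)=0 \qquad \text{for all } (\alpha_1,\alpha_2)\in\mathbb{N}^2. \] *)

theory Defs
  imports "HOL-Analysis.Analysis"
begin

definition partial_x :: "(real \<times> real \<Rightarrow> real) \<Rightarrow> real \<times> real \<Rightarrow> real" where
  "partial_x g = (\<lambda>(x, y). deriv (\<lambda>t. g (t, y)) x)"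

definition partial_y :: "(real \<times> real \<Rightarrow> real) \<Rightarrow> real \<times> real \<Rightarrow> real" where
  "partial_y g = (\<lambda>(x, y). deriv (\<lambda>t. g (x, t)) y)"

text \<open>Iterated partial derivative along a word of directions (False = x, True = y),
  applied right to left.\<close>
fun iter_partial :: "bool list \<Rightarrow> (real \<times> real \<Rightarrow> real) \<Rightarrow> real \<times> real \<Rightarrow> real" where
  "iter_partial [] g = g"
| "iter_partial (d # ds) g = (if d then partial_y else partial_x) (iter_partial ds g)"

definition smooth_R2 :: "(real \<times> real \<Rightarrow> real) \<Rightarrow> bool" where
  "smooth_R2 f \<longleftrightarrow>
     (\<forall>ds. continuous_on UNIV (iter_partial ds f) \<and>
       (\<forall>x y. (\<lambda>t. iter_partial ds f (t, y)) differentiable (at x) \<and>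
              (\<lambda>t. iter_partial ds f (x, t)) differentiable (at y)))"

definition hawaiian_earring :: "(real \<times> real) set" where
  "hawaiian_earring =
     (\<Union>n\<in>{1::nat..}. {(x, y). (x - 1 / real n)^2 + y^2 = 1 / (real n)^2})"

end

theory Submission
  imports Defs
begin

(* If all partial derivatives of order < d vanish at the origin,
   Taylor expansion in y, followed by Taylor expansion of each coefficient in x, gives
   f (s, s y) = s^d P(y) + O(s^(d+1)), where P is the polynomial whose coefficients are the
   derivatives of order d divided by factorials. The line of slope y through the origin meets
   every circle C_n a second time, at points tending to the origin; hence P(y) = 0 for all y,
   and all coefficients vanish. Only one-variable Taylor expansions are used, so no symmetry
   of mixed partial derivatives is needed. *)

definition mixed_partial :: "(real \<times> real \<Rightarrow> real) \<Rightarrow> nat \<Rightarrow> nat \<Rightarrow> real \<times> real \<Rightarrow> real" where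
  "mixed_partial f i j = iter_partial (replicate i False @ replicate j True) f"

lemma iter_partial_append: "iter_partial (xs @ ys) g = iter_partial xs (iter_partial ys g)"
  by (induction xs) auto

lemma funpow_partial_x: "(partial_x ^^ i) g = iter_partial (replicate i False) g"
  by (induction i) auto

lemma funpow_partial_y: "(partial_y ^^ j) g = iter_partial (replicate j True) g"
  by (induction j) auto

lemma funpow_partials_eq_mixed_partial: "(partial_x ^^ i) ((partial_y ^^ j) f) = mixed_partial f i j"
  by (simp add: mixed_partial_def funpow_partial_x funpow_partial_y iter_partial_append)

lemma mixed_partial_0_0 [simp]: "mixed_partial f 0 0 = f"
  by (simp add: mixed_partial_def)

lemma smooth_R2_has_derivative_x:
  assumes "smooth_R2 f"
  shows "((\<lambda>t. mixed_partial f i j (t, y)) has_real_derivative mixed_partial f (Suc i) j (x, y)) (at x)"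
proof -
  have "(\<lambda>t. mixed_partial f i j (t, y)) differentiable (at x)"
    using assms unfolding smooth_R2_def mixed_partial_def by blast
  then show ?thesis
    by (simp add: mixed_partial_def partial_x_def DERIV_deriv_iff_real_differentiable)
qed

lemma smooth_R2_has_derivative_y:
  assumes "smooth_R2 f"
  shows "((\<lambda>t. mixed_partial f 0 j (x, t)) has_real_derivative mixed_partial f 0 (Suc j) (x, y)) (at y)"
proof -
  have "(\<lambda>t. mixed_partial f 0 j (x, t)) differentiable (at y)"
    using assms unfolding smooth_R2_def mixed_partial_def by blast
  then show ?thesis
    by (simp add: mixed_partial_def partial_y_def DERIV_deriv_iff_real_differentiable)
qed

lemma smooth_R2_mixed_partial_bounded:
  assumes "smooth_R2 f"
  obtains B where "\<And>x y. \<bar>x\<bar> \<le> 1 \<Longrightarrow> \<bar>y\<bar> \<le> 1 \<Longrightarrow> \<bar>mixed_partial f i j (x, y)\<bar> \<le> B"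
proof -
  have "continuous_on ({-1..1} \<times> {-1..1}) (mixed_partial f i j)"
    using assms unfolding smooth_R2_def mixed_partial_def by (blast intro: continuous_on_subset)
  then obtain B where "\<And>p. p \<in> {-1..1::real} \<times> {-1..1::real} \<Longrightarrow> norm (mixed_partial f i j p) \<le> B"
    using continuous_on_compact_bound compact_Times compact_Icc by metis
  then show ?thesis
    by (intro that[of B]) (auto simp: abs_le_iff)
qed

lemma Maclaurin_remainder_bound:
  fixes g :: "nat \<Rightarrow> real \<Rightarrow> real"
  assumes "\<And>m x. (g m has_real_derivative g (Suc m) x) (at x)"
    and "\<And>t. \<bar>t\<bar> \<le> r \<Longrightarrow> \<bar>g K t\<bar> \<le> B" and "\<bar>s\<bar> \<le> r"
  shows "\<bar>g 0 s - (\<Sum>m<K. g m 0 / fact m * s ^ m)\<bar> \<le> B * \<bar>s\<bar> ^ K"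
proof -
  obtain t where t: "\<bar>t\<bar> \<le> \<bar>s\<bar>"
    and taylor: "g 0 s = (\<Sum>m<K. g m 0 / fact m * s ^ m) + g K t / fact K * s ^ K"
    using Maclaurin_all_le[of g "g 0"] assms(1) by blast
  have "\<bar>g K t / fact K\<bar> \<le> \<bar>g K t\<bar>"
    by (simp add: divide_le_eq mult_le_cancel_left1)
  also have "\<dots> \<le> B"
    using assms(2,3) t by simp
  finally have "\<bar>g K t / fact K * s ^ K\<bar> \<le> B * \<bar>s\<bar> ^ K"
    unfolding abs_mult power_abs by (rule mult_right_mono) simp
  then show ?thesis
    using taylor by simp
qed

lemma smooth_R2_taylor_x_axis:
  assumes "smooth_R2 f" and "\<And>m. m < k \<Longrightarrow> mixed_partial f m j (0, 0) = 0"
  obtains C where "\<And>s. \<bar>s\<bar> \<le> 1 \<Longrightarrow>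
    \<bar>mixed_partial f 0 j (s, 0) - mixed_partial f k j (0, 0) / fact k * s ^ k\<bar> \<le> C * \<bar>s\<bar> ^ Suc k"
proof -
  obtain C where C: "\<And>x y. \<bar>x\<bar> \<le> 1 \<Longrightarrow> \<bar>y\<bar> \<le> 1 \<Longrightarrow> \<bar>mixed_partial f (Suc k) j (x, y)\<bar> \<le> C"
    using smooth_R2_mixed_partial_bounded[OF assms(1)] by blast
  have "\<bar>mixed_partial f 0 j (s, 0) - mixed_partial f k j (0, 0) / fact k * s ^ k\<bar> \<le> C * \<bar>s\<bar> ^ Suc k"
    if "\<bar>s\<bar> \<le> 1" for s
  proof -
    have "\<bar>mixed_partial f 0 j (s, 0) - (\<Sum>m<Suc k. mixed_partial f m j (0, 0) / fact m * s ^ m)\<bar>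
            \<le> C * \<bar>s\<bar> ^ Suc k"
      by (rule Maclaurin_remainder_bound[where g = "\<lambda>m t. mixed_partial f m j (t, 0)"])
        (use smooth_R2_has_derivative_x[OF assms(1)] C that in auto)
    then show ?thesis
      using assms(2) by simp
  qed
  then show ?thesis
    by (rule that)
qed

lemma smooth_R2_taylor_y:
  assumes "smooth_R2 f"
  obtains C where "\<And>x y. \<bar>x\<bar> \<le> 1 \<Longrightarrow> \<bar>y\<bar> \<le> 1 \<Longrightarrow>
    \<bar>f (x, y) - (\<Sum>j<K. mixed_partial f 0 j (x, 0) / fact j * y ^ j)\<bar> \<le> C * \<bar>y\<bar> ^ K"
proof -
  obtain C where C: "\<And>x y. \<bar>x\<bar> \<le> 1 \<Longrightarrow> \<bar>y\<bar> \<le> 1 \<Longrightarrow> \<bar>mixed_partial f 0 K (x, y)\<bar> \<le> C"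
    using smooth_R2_mixed_partial_bounded[OF assms] by blast
  have "\<bar>f (x, y) - (\<Sum>j<K. mixed_partial f 0 j (x, 0) / fact j * y ^ j)\<bar> \<le> C * \<bar>y\<bar> ^ K"
    if "\<bar>x\<bar> \<le> 1" "\<bar>y\<bar> \<le> 1" for x y
  proof -
    have "\<bar>mixed_partial f 0 0 (x, y) - (\<Sum>j<K. mixed_partial f 0 j (x, 0) / fact j * y ^ j)\<bar>
            \<le> C * \<bar>y\<bar> ^ K"
      by (rule Maclaurin_remainder_bound[where g = "\<lambda>m t. mixed_partial f 0 m (x, t)"])
        (use smooth_R2_has_derivative_y[OF assms] C that in auto)
    then show ?thesis
      by simp
  qed
  then show ?thesis
    by (rule that)
qed

lemma sum_power_approx_bound:
  fixes a b C :: "nat \<Rightarrow> real"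
  assumes approx: "\<And>j. j \<le> d \<Longrightarrow> \<bar>a j - b j * s ^ (d - j)\<bar> \<le> C j * s ^ (Suc d - j)"
    and "s \<ge> 0"
  shows "\<bar>(\<Sum>j\<le>d. a j * (s * y) ^ j) - s ^ d * (\<Sum>j\<le>d. b j * y ^ j)\<bar>
           \<le> (\<Sum>j\<le>d. C j * \<bar>y\<bar> ^ j) * s ^ Suc d"
proof -
  have split_power: "s ^ d = s ^ (d - j) * s ^ j" "s ^ Suc d = s ^ (Suc d - j) * s ^ j" if "j \<le> d" for j
    using that by (simp_all add: power_add[symmetric] Suc_diff_le)
  have "(\<Sum>j\<le>d. a j * (s * y) ^ j) - s ^ d * (\<Sum>j\<le>d. b j * y ^ j)
          = (\<Sum>j\<le>d. (a j - b j * s ^ (d - j)) * (s * y) ^ j)"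
    by (auto simp add: sum_distrib_left sum_subtractf[symmetric] split_power algebra_simps intro!: sum.cong)
  also have "\<bar>\<dots>\<bar> \<le> (\<Sum>j\<le>d. C j * s ^ (Suc d - j) * \<bar>s * y\<bar> ^ j)"
    by (rule order_trans[OF sum_abs sum_mono])
      (simp add: abs_mult power_abs approx mult_right_mono)
  also have "\<dots> = (\<Sum>j\<le>d. C j * \<bar>y\<bar> ^ j * s ^ Suc d)"
  proof (rule sum.cong)
    fix j assume "j \<in> {..d}"
    have "C j * s ^ (Suc d - j) * \<bar>s * y\<bar> ^ j = C j * \<bar>y\<bar> ^ j * (s ^ (Suc d - j) * s ^ j)"
      using \<open>s \<ge> 0\<close> by (simp add: abs_mult power_mult_distrib mult_ac)
    then show "C j * s ^ (Suc d - j) * \<bar>s * y\<bar> ^ j = C j * \<bar>y\<bar> ^ j * s ^ Suc d"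
      using \<open>j \<in> {..d}\<close> split_power(2) by simp
  qed simp
  also have "\<dots> = (\<Sum>j\<le>d. C j * \<bar>y\<bar> ^ j) * s ^ Suc d"
    by (simp add: sum_distrib_right)
  finally show ?thesis .
qed

(* The degree-d Taylor term of f at the origin evaluated at (1, y). *)
definition taylor_form :: "(real \<times> real \<Rightarrow> real) \<Rightarrow> nat \<Rightarrow> real \<Rightarrow> real" where
  "taylor_form f d y = (\<Sum>j\<le>d. mixed_partial f (d - j) j (0, 0) / (fact (d - j) * fact j) * y ^ j)"

lemma smooth_R2_taylor_coefficients_x_axis:
  assumes f: "smooth_R2 f" and lower: "\<And>i j. i + j < d \<Longrightarrow> mixed_partial f i j (0, 0) = 0"
  obtains C where "\<And>j s. j \<le> d \<Longrightarrow> \<bar>s\<bar> \<le> 1 \<Longrightarrow>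
    \<bar>mixed_partial f 0 j (s, 0) / fact j
       - mixed_partial f (d - j) j (0, 0) / (fact (d - j) * fact j) * s ^ (d - j)\<bar>
    \<le> C j * \<bar>s\<bar> ^ (Suc d - j)"
proof -
  have "\<exists>C. \<forall>s. \<bar>s\<bar> \<le> 1 \<longrightarrow> \<bar>mixed_partial f 0 j (s, 0)
          - mixed_partial f (d - j) j (0, 0) / fact (d - j) * s ^ (d - j)\<bar> \<le> C * \<bar>s\<bar> ^ Suc (d - j)"
    for j
  proof -
    have "mixed_partial f m j (0, 0) = 0" if "m < d - j" for m
      using lower that by simp
    then show ?thesis
      using smooth_R2_taylor_x_axis[OF f] by metis
  qed
  then obtain C where C: "\<And>j s. \<bar>s\<bar> \<le> 1 \<Longrightarrow> \<bar>mixed_partial f 0 j (s, 0)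
          - mixed_partial f (d - j) j (0, 0) / fact (d - j) * s ^ (d - j)\<bar> \<le> C j * \<bar>s\<bar> ^ Suc (d - j)"
    by metis
  have "\<bar>mixed_partial f 0 j (s, 0) / fact j
          - mixed_partial f (d - j) j (0, 0) / (fact (d - j) * fact j) * s ^ (d - j)\<bar>
        \<le> C j * \<bar>s\<bar> ^ (Suc d - j)" if "j \<le> d" "\<bar>s\<bar> \<le> 1" for j s
  proof -
    have "\<bar>mixed_partial f 0 j (s, 0) / fact j
            - mixed_partial f (d - j) j (0, 0) / (fact (d - j) * fact j) * s ^ (d - j)\<bar>
          = \<bar>(mixed_partial f 0 j (s, 0)
            - mixed_partial f (d - j) j (0, 0) / fact (d - j) * s ^ (d - j)) / fact j\<bar>"
      by (rule arg_cong[where f = abs]) (simp add: field_simps)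
    also have "\<dots> \<le> \<bar>mixed_partial f 0 j (s, 0)
            - mixed_partial f (d - j) j (0, 0) / fact (d - j) * s ^ (d - j)\<bar>"
      by (simp add: divide_le_eq mult_le_cancel_left1)
    also have "\<dots> \<le> C j * \<bar>s\<bar> ^ (Suc d - j)"
      using C[OF \<open>\<bar>s\<bar> \<le> 1\<close>, of j] \<open>j \<le> d\<close> by (simp add: Suc_diff_le)
    finally show ?thesis .
  qed
  then show ?thesis
    by (rule that)
qed

lemma smooth_R2_ray_estimate:
  assumes f: "smooth_R2 f" and lower: "\<And>i j. i + j < d \<Longrightarrow> mixed_partial f i j (0, 0) = 0"
  obtains E where "\<And>y s. 0 < s \<Longrightarrow> s * (1 + \<bar>y\<bar>) \<le> 1 \<Longrightarrow>
    \<bar>f (s, s * y) - s ^ d * taylor_form f d y\<bar> \<le> E y * s ^ Suc d"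
proof -
  obtain C where C: "\<And>j s. j \<le> d \<Longrightarrow> \<bar>s\<bar> \<le> 1 \<Longrightarrow>
      \<bar>mixed_partial f 0 j (s, 0) / fact j
         - mixed_partial f (d - j) j (0, 0) / (fact (d - j) * fact j) * s ^ (d - j)\<bar>
      \<le> C j * \<bar>s\<bar> ^ (Suc d - j)"
    using smooth_R2_taylor_coefficients_x_axis[OF f lower] by blast
  obtain C0 where C0: "\<And>x y. \<bar>x\<bar> \<le> 1 \<Longrightarrow> \<bar>y\<bar> \<le> 1 \<Longrightarrow>
      \<bar>f (x, y) - (\<Sum>j<Suc d. mixed_partial f 0 j (x, 0) / fact j * y ^ j)\<bar> \<le> C0 * \<bar>y\<bar> ^ Suc d"
    using smooth_R2_taylor_y[OF f] by blast
  have "\<bar>f (s, s * y) - s ^ d * taylor_form f d y\<bar>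
          \<le> (C0 * \<bar>y\<bar> ^ Suc d + (\<Sum>j\<le>d. C j * \<bar>y\<bar> ^ j)) * s ^ Suc d"
    if s: "0 < s" "s * (1 + \<bar>y\<bar>) \<le> 1" for y s
  proof -
    have "s + \<bar>s * y\<bar> \<le> 1" "0 \<le> \<bar>s * y\<bar>"
      using s by (simp_all add: distrib_left abs_mult)
    then have "\<bar>s\<bar> \<le> 1" "\<bar>s * y\<bar> \<le> 1"
      using s(1) by linarith+
    define T where "T = (\<Sum>j\<le>d. mixed_partial f 0 j (s, 0) / fact j * (s * y) ^ j)"
    have "\<bar>f (s, s * y) - T\<bar> \<le> C0 * \<bar>y\<bar> ^ Suc d * s ^ Suc d"
      using C0[OF \<open>\<bar>s\<bar> \<le> 1\<close> \<open>\<bar>s * y\<bar> \<le> 1\<close>] s(1)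
      by (simp add: T_def lessThan_Suc_atMost abs_mult power_mult_distrib mult_ac)
    moreover have "\<bar>T - s ^ d * taylor_form f d y\<bar> \<le> (\<Sum>j\<le>d. C j * \<bar>y\<bar> ^ j) * s ^ Suc d"
      unfolding T_def taylor_form_def
      by (rule sum_power_approx_bound) (use C[OF _ \<open>\<bar>s\<bar> \<le> 1\<close>] s(1) in simp_all)
    ultimately show ?thesis
      by (simp add: distrib_right abs_triangle_ineq[THEN order_trans])
  qed
  then show ?thesis
    by (rule that)
qed

(* The second intersection of the line of slope y through the origin with the circle C (n + 1). *)
lemma ray_point_in_hawaiian_earring:
  "(2 / (1 + y\<^sup>2) / real (Suc n), 2 / (1 + y\<^sup>2) / real (Suc n) * y) \<in> hawaiian_earring"
proof -
  define a where "a = 1 + y\<^sup>2"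
  define r :: real where "r = real (Suc n)"
  have "a > 0" "r > 0"
    by (simp_all add: a_def r_def add_pos_nonneg)
  have "(2 / a / r - 1 / r)\<^sup>2 + (2 / a / r * y)\<^sup>2 = ((2 - a)\<^sup>2 + 4 * y\<^sup>2) / (a\<^sup>2 * r\<^sup>2)"
    using \<open>a > 0\<close> \<open>r > 0\<close> by (simp add: field_simps power2_eq_square)
  also have "(2 - a)\<^sup>2 + 4 * y\<^sup>2 = a\<^sup>2"
    by (simp add: a_def power2_eq_square algebra_simps)
  finally have "(2 / a / r - 1 / r)\<^sup>2 + (2 / a / r * y)\<^sup>2 = 1 / r\<^sup>2"
    using \<open>a > 0\<close> by simp
  then show ?thesis
    unfolding hawaiian_earring_def a_def r_def by (intro UN_I[of "Suc n"]) auto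
qed

lemma eq_0_if_power_bound_on_null_sequence:
  fixes q E :: real and s :: "nat \<Rightarrow> real"
  assumes "s \<longlonglongrightarrow> 0" and "\<And>n. 0 < s n"
    and "eventually (\<lambda>n. \<bar>s n ^ d * q\<bar> \<le> E * s n ^ Suc d) sequentially"
  shows "q = 0"
proof -
  have "eventually (\<lambda>n. \<bar>q\<bar> \<le> E * s n) sequentially"
    using assms(3)
  proof eventually_elim
    case (elim n)
    then have "s n ^ d * \<bar>q\<bar> \<le> s n ^ d * (E * s n)"
      using assms(2)[of n] by (simp add: abs_mult mult_ac)
    then show ?case
      using assms(2)[of n] by simp
  qed
  moreover have "(\<lambda>n. E * s n) \<longlonglongrightarrow> 0"
    using tendsto_mult_right_zero[OF assms(1)] .
  ultimately have "\<bar>q\<bar> \<le> 0"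
    by (intro tendsto_le[OF trivial_limit_sequentially _ tendsto_const])
  then show ?thesis
    by simp
qed

lemma taylor_form_eq_0_if_vanishes_on_hawaiian_earring:
  assumes f: "smooth_R2 f" and vanish: "\<forall>p\<in>hawaiian_earring. f p = 0"
    and lower: "\<And>i j. i + j < d \<Longrightarrow> mixed_partial f i j (0, 0) = 0"
  shows "taylor_form f d y = 0"
proof -
  obtain E where E: "\<And>y s. 0 < s \<Longrightarrow> s * (1 + \<bar>y\<bar>) \<le> 1 \<Longrightarrow>
      \<bar>f (s, s * y) - s ^ d * taylor_form f d y\<bar> \<le> E y * s ^ Suc d"
    using smooth_R2_ray_estimate[OF f lower] by blast
  define s where "s n = 2 / (1 + y\<^sup>2) / real (Suc n)" for n
  have "s \<longlonglongrightarrow> 0"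
    unfolding s_def by (rule LIMSEQ_Suc[OF lim_const_over_n])
  moreover have pos: "0 < s n" for n
    by (simp add: s_def add_pos_nonneg)
  moreover have "eventually (\<lambda>n. \<bar>s n ^ d * taylor_form f d y\<bar> \<le> E y * s n ^ Suc d) sequentially"
  proof -
    have "eventually (\<lambda>n. s n < 1 / (1 + \<bar>y\<bar>)) sequentially"
      using \<open>s \<longlonglongrightarrow> 0\<close> by (rule order_tendstoD) simp
    then show ?thesis
    proof eventually_elim
      case (elim n)
      then have "s n * (1 + \<bar>y\<bar>) \<le> 1"
        by (simp add: less_divide_eq add_pos_nonneg less_imp_le)
      moreover have "f (s n, s n * y) = 0"
        using vanish ray_point_in_hawaiian_earring[of y n] by (simp add: s_def)
      ultimately show ?case
        using E[of "s n" y] pos[of n] by simp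
    qed
  qed
  ultimately show ?thesis
    by (rule eq_0_if_power_bound_on_null_sequence)
qed

lemma mixed_partial_eq_0_if_lower_orders_vanish:
  assumes f: "smooth_R2 f" and vanish: "\<forall>p\<in>hawaiian_earring. f p = 0"
    and lower: "\<And>i j. i + j < i' + j' \<Longrightarrow> mixed_partial f i j (0, 0) = 0"
  shows "mixed_partial f i' j' (0, 0) = 0"
proof -
  let ?d = "i' + j'"
  have "\<forall>y. taylor_form f ?d y = 0"
    using taylor_form_eq_0_if_vanishes_on_hawaiian_earring[OF f vanish lower] by blast
  then have "mixed_partial f (?d - j') j' (0, 0) / (fact (?d - j') * fact j') = 0"
    unfolding taylor_form_def polyfun_eq_0 by (metis le_add2)
  then show ?thesis
    by simp
qed

theorem theorem4:
  fixes f :: "real \<times> real \<Rightarrow> real"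
  assumes "smooth_R2 f"
    and "\<forall>p\<in>hawaiian_earring. f p = 0"
  shows "\<forall>a1 a2 :: nat. (partial_x ^^ a1) ((partial_y ^^ a2) f) (0, 0) = 0"
proof -
  have "mixed_partial f i j (0, 0) = 0" for i j
  proof (induction "i + j" arbitrary: i j rule: less_induct)
    case less
    then show ?case
      using mixed_partial_eq_0_if_lower_orders_vanish[OF assms] by blast
  qed
  then show ?thesis
    by (simp add: funpow_partials_eq_mixed_partial)
qed

end
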